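(* Let $d\ge1$, $\epsilon>0$, $\theta>0$ with $\theta\epsilon^2\ge c_0>0$, and $x\in\mathbb R^d$. Let $(\Pi(s))_{s\ge0}$ be a rate one Poisson process and $T(t)=\Pi(\theta t)/\theta$. Then for all $t\ge0$ and $y\in\mathbb R^d$, $\psi^{\epsilon,x}_t(y)=\mathbb E[p_{\epsilon^2+T(t)}(x,y)]$, and there is a constant $C$, independent of $\epsilon$ and $t$ (depending only on $d$ and $c_0$), such that $\|\psi^{\epsilon,x}_t\|_\infty\le\frac{C}{(\epsilon^2+t)^{d/2}}$.
   Context: $p_t(x,y)=(2\pi t)^{-d/2}\exp(-\|x-y\|^2/(2t))$ is the heat kernel. $q_\theta(x,dy)$ is the Gaussian distribution with mean $x$ and covariance $\theta^{-1}I$, and $\mathcal L^\theta f(x)=\theta\int(f(y)-f(x))q_\theta(x,dy)$ (the generator of a random walk jumping at rate $\theta$ with centered Gaussian jumps of covariance $\theta^{-1}I$). $\psi^{\epsilon,x}_t$ is the solution of $\partial_t\psi=\mathcal L^\theta\psi$ with $\psi_0(y)=p_{\epsilon^2}(x,y)$. *)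

theory Defs
  imports "HOL-Analysis.Analysis" "HOL-Probability.Probability"
begin

definition heat_kernel :: "real \<Rightarrow> real^'n \<Rightarrow> real^'n \<Rightarrow> real" where
  "heat_kernel t x y =
     (2 * pi * t) powr (- real CARD('n) / 2) * exp (- (norm (x - y) ^ 2) / (2 * t))"

text \<open>Generator L^theta f(x) = theta * int (f y - f x) q_theta(x,dy), where q_theta(x,.) is
  the Gaussian with mean x and covariance theta^{-1} I, i.e. with Lebesgue density
  p_{1/theta}(x,.).\<close>
definition gen_L :: "real \<Rightarrow> (real^'n \<Rightarrow> real) \<Rightarrow> real^'n \<Rightarrow> real" where
  "gen_L \<theta> f x = \<theta> * (\<integral>y. (f y - f x) * heat_kernel (1 / \<theta>) x y \<partial>lborel)"

text \<open>psi solves d/dt psi = L^theta psi on [0,oo) with psi_0 = f0, in the class of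
  functions that are Borel measurable and bounded in space, locally uniformly in time
  (the natural Banach-space (L^infty / C_b) sense; L^theta is a bounded operator there).\<close>
definition solves_generator_eq ::
    "real \<Rightarrow> (real^'n \<Rightarrow> real) \<Rightarrow> (real \<Rightarrow> real^'n \<Rightarrow> real) \<Rightarrow> bool" where
  "solves_generator_eq \<theta> f0 \<psi> \<longleftrightarrow>
     \<psi> 0 = f0 \<and>
     (\<forall>t\<ge>0. \<psi> t \<in> borel_measurable lborel) \<and>
     (\<forall>T\<ge>0. \<exists>B. \<forall>t\<in>{0..T}. \<forall>y. \<bar>\<psi> t y\<bar> \<le> B) \<and>
     (\<forall>t\<ge>0. \<forall>y. ((\<lambda>s. \<psi> s y) has_real_derivative gen_L \<theta> (\<psi> t) y) (at t within {0..}))"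

definition rate_one_poisson_process :: "'a measure \<Rightarrow> (real \<Rightarrow> 'a \<Rightarrow> nat) \<Rightarrow> bool" where
  "rate_one_poisson_process M N \<longleftrightarrow>
     prob_space M \<and>
     (\<forall>s\<ge>0. N s \<in> measurable M (count_space UNIV)) \<and>
     (\<forall>\<omega>\<in>space M. N 0 \<omega> = 0) \<and>
     (\<forall>\<omega>\<in>space M. \<forall>s t. 0 \<le> s \<longrightarrow> s \<le> t \<longrightarrow> N s \<omega> \<le> N t \<omega>) \<and>
     (\<forall>s t. 0 \<le> s \<longrightarrow> s < t \<longrightarrow>
        distr M (count_space UNIV) (\<lambda>\<omega>. N t \<omega> - N s \<omega>) = measure_pmf (poisson_pmf (t - s))) \<and>
     (\<forall>ts :: nat \<Rightarrow> real. \<forall>n. 0 \<le> ts 0 \<longrightarrow> (\<forall>i. ts i \<le> ts (Suc i)) \<longrightarrow>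
        prob_space.indep_vars M (\<lambda>_. count_space UNIV)
          (\<lambda>i \<omega>. N (ts (Suc i)) \<omega> - N (ts i) \<omega>) {..<n})"

end

theory Submission
  imports Defs
begin

text \<open>The candidate solution is the Poisson mixture \<open>u\<^sub>t = E p\<^bsub>\<epsilon>\<^sup>2 + N(\<theta>t)/\<theta>\<^esub>(x, \<cdot>)\<close>
  of heat kernels. By Chapman--Kolmogorov, averaging against \<open>q\<^sub>\<theta>\<close> adds one jump to every
  term, so \<open>L\<^sup>\<theta> u\<close> is exactly the right-hand side of the forward equation of the Poisson
  process and \<open>u\<close> solves the equation; since \<open>L\<^sup>\<theta>\<close> is bounded, bounded solutions are unique.
  For the decay, \<open>p\<^sub>s \<le> (2\<pi>s)\<^sup>-\<^sup>d\<^sup>/\<^sup>2\<close> reduces the claim to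
  \<open>E (A + N)\<^sup>-\<^sup>d\<^sup>/\<^sup>2 \<le> C (A + \<lambda>)\<^sup>-\<^sup>d\<^sup>/\<^sup>2\<close> for \<open>A = \<theta>\<epsilon>\<^sup>2 \<ge> c\<^sub>0\<close> and \<open>N\<close> Poisson
  with mean \<open>\<lambda> = \<theta>t\<close>. This is trivial for \<open>\<lambda> \<le> A\<close>; otherwise compare \<open>A + N\<close> with a
  multiple of \<open>N + d\<close> and combine Jensen's inequality for the square root with
  \<open>E 1 / (N + d)\<^sup>d \<le> \<lambda>\<^sup>-\<^sup>d\<close>.\<close>

section \<open>The heat kernel\<close>

lemma power2_norm_eq_sum_Basis: "(norm (z::'a::euclidean_space))^2 = (\<Sum>b\<in>Basis. (z \<bullet> b)^2)"
  unfolding power2_norm_eq_inner by (subst euclidean_inner) (simp add: power2_eq_square)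

lemma heat_kernel_nonneg: "heat_kernel s x z \<ge> 0"
  unfolding heat_kernel_def by simp

lemma borel_measurable_heat_kernel [measurable]:
  "heat_kernel s (x::real^'n) \<in> borel_measurable borel"
  unfolding heat_kernel_def by measurable

lemma heat_kernel_eq_prod_normal_density:
  fixes x z :: "real^'n"
  assumes s: "s > 0"
  shows "heat_kernel s x z = (\<Prod>b\<in>Basis. normal_density (x \<bullet> b) (sqrt s) (z \<bullet> b))"
proof -
  have "(\<Prod>b\<in>Basis. normal_density (x \<bullet> b) (sqrt s) (z \<bullet> b))
     = (\<Prod>b\<in>(Basis::(real^'n) set). 1 / sqrt (2 * pi * s) * exp (- (((x - z) \<bullet> b)^2) / (2 * s)))"
    using s by (intro prod.cong refl) (simp add: normal_density_def inner_diff_left power2_commute)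
  also have "\<dots> = (1 / sqrt (2 * pi * s))^CARD('n) *
      exp (\<Sum>b\<in>(Basis::(real^'n) set). - (((x - z) \<bullet> b)^2) / (2 * s))"
    by (simp only: prod.distrib prod_constant exp_sum finite_Basis) simp
  also have "(\<Sum>b\<in>(Basis::(real^'n) set). - (((x - z) \<bullet> b)^2) / (2 * s)) = - ((norm (x - z))^2) / (2 * s)"
    by (simp add: power2_norm_eq_sum_Basis[of "x - z"] sum_divide_distrib sum_negf)
  also have "(1 / sqrt (2 * pi * s))^CARD('n) = (2 * pi * s) powr (- real CARD('n) / 2)"
  proof -
    have "1 / sqrt (2 * pi * s) = (2 * pi * s) powr (- 1 / 2)"
      using s by (simp add: powr_minus_divide powr_half_sqrt[symmetric] powr_minus)
    then show ?thesis using s by (simp add: powr_realpow[symmetric] powr_powr)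
  qed
  finally show ?thesis unfolding heat_kernel_def by simp
qed

lemma normal_density_mult:
  fixes s r :: real assumes s: "s > 0" and r: "r > 0"
  shows "normal_density a (sqrt s) w * normal_density c (sqrt r) w =
    normal_density a (sqrt (s + r)) c * normal_density ((r * a + s * c) / (s + r)) (sqrt (s * r / (s + r))) w"
proof -
  have sq: "sqrt (2 * pi * s) * sqrt (2 * pi * r) = sqrt (2 * pi * (s + r)) * sqrt (2 * pi * (s * r / (s + r)))"
    using s r by (simp add: real_sqrt_mult[symmetric] field_simps)
  have ex: "- ((w - a)^2) / (2 * s) + - ((w - c)^2) / (2 * r) =
     - ((c - a)^2) / (2 * (s + r)) + - ((w - (r * a + s * c) / (s + r))^2) / (2 * (s * r / (s + r)))"
  proof -
    have poly: "r * (s + r) * (w - a)^2 + s * (s + r) * (w - c)^2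
        = s * r * (c - a)^2 + ((s + r) * w - (r * a + s * c))^2"
      by (simp add: power2_eq_square algebra_simps)
    have shift: "w - (r * a + s * c) / (s + r) = ((s + r) * w - (r * a + s * c)) / (s + r)"
      using s r by (simp add: field_simps)
    have "- ((w - a)^2) / (2 * s) + - ((w - c)^2) / (2 * r)
        = - (r * (s + r) * (w - a)^2 + s * (s + r) * (w - c)^2) / (2 * s * r * (s + r))"
      using s r by (simp add: divide_simps) (simp add: algebra_simps)
    also have "\<dots> = - (s * r * (c - a)^2 + ((s + r) * w - (r * a + s * c))^2) / (2 * s * r * (s + r))"
      by (simp only: poly)
    also have "\<dots> = - ((c - a)^2) / (2 * (s + r)) + - ((w - (r * a + s * c) / (s + r))^2) / (2 * (s * r / (s + r)))"
      unfolding shift using s r by (simp add: divide_simps power2_eq_square) algebra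
    finally show ?thesis .
  qed
  have "normal_density a (sqrt s) w * normal_density c (sqrt r) w =
     1 / (sqrt (2 * pi * s) * sqrt (2 * pi * r)) * exp (- ((w - a)^2) / (2 * s) + - ((w - c)^2) / (2 * r))"
    using s r by (simp add: normal_density_def exp_add[symmetric])
  also have "\<dots> = 1 / (sqrt (2 * pi * (s + r)) * sqrt (2 * pi * (s * r / (s + r)))) *
      exp (- ((c - a)^2) / (2 * (s + r)) + - ((w - (r * a + s * c) / (s + r))^2) / (2 * (s * r / (s + r))))"
    by (simp only: sq ex)
  also have "\<dots> = normal_density a (sqrt (s + r)) c *
      normal_density ((r * a + s * c) / (s + r)) (sqrt (s * r / (s + r))) w"
    using s r unfolding exp_add by (simp add: normal_density_def power2_commute[of c a])
  finally show ?thesis .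
qed

lemma nn_integral_normal_density_mult:
  fixes s r :: real assumes s: "s > 0" and r: "r > 0"
  shows "(\<integral>\<^sup>+w. ennreal (normal_density a (sqrt s) w * normal_density c (sqrt r) w) \<partial>lborel)
     = ennreal (normal_density a (sqrt (s + r)) c)"
proof -
  define m v where "m = (r * a + s * c) / (s + r)" and "v = sqrt (s * r / (s + r))"
  have "(\<integral>\<^sup>+w. ennreal (normal_density a (sqrt s) w * normal_density c (sqrt r) w) \<partial>lborel)
    = (\<integral>\<^sup>+w. ennreal (normal_density a (sqrt (s + r)) c) * ennreal (normal_density m v w) \<partial>lborel)"
    unfolding m_def v_def by (intro nn_integral_cong) (simp add: normal_density_mult[OF s r] ennreal_mult')
  also have "\<dots> = ennreal (normal_density a (sqrt (s + r)) c) * (\<integral>\<^sup>+w. ennreal (normal_density m v w) \<partial>lborel)"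
    by (rule nn_integral_cmult) simp
  also have "(\<integral>\<^sup>+w. ennreal (normal_density m v w) \<partial>lborel) = 1"
    using s r unfolding v_def
    by (subst nn_integral_eq_integral) (auto intro!: integrable_normal_density simp: integral_normal_density)
  finally show ?thesis by simp
qed

lemma nn_integral_heat_kernel:
  fixes x :: "real^'n" assumes s: "s > 0"
  shows "(\<integral>\<^sup>+z. ennreal (heat_kernel s x z) \<partial>lborel) = 1"
proof -
  have "(\<integral>\<^sup>+z. ennreal (heat_kernel s x z) \<partial>lborel) =
     (\<integral>\<^sup>+z. (\<Prod>b\<in>Basis. ennreal (normal_density (x \<bullet> b) (sqrt s) (z \<bullet> b))) \<partial>lborel)"
    by (intro nn_integral_cong) (simp add: heat_kernel_eq_prod_normal_density[OF s] prod_ennreal)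
  also have "\<dots> = (\<Prod>b\<in>(Basis::(real^'n) set). (\<integral>\<^sup>+w. ennreal (normal_density (x \<bullet> b) (sqrt s) w) \<partial>lborel))"
    by (rule nn_integral_lborel_prod) auto
  also have "\<dots> = 1"
    by (intro prod.neutral ballI)
       (subst nn_integral_eq_integral, auto intro!: integrable_normal_density simp: integral_normal_density s)
  finally show ?thesis .
qed

lemma nn_integral_heat_kernel_mult:
  fixes x y :: "real^'n" assumes s: "s > 0" and r: "r > 0"
  shows "(\<integral>\<^sup>+z. ennreal (heat_kernel s x z * heat_kernel r y z) \<partial>lborel) = ennreal (heat_kernel (s + r) x y)"
proof -
  have "(\<integral>\<^sup>+z. ennreal (heat_kernel s x z * heat_kernel r y z) \<partial>lborel) =
     (\<integral>\<^sup>+z. (\<Prod>b\<in>Basis. ennreal (normal_density (x \<bullet> b) (sqrt s) (z \<bullet> b) *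
        normal_density (y \<bullet> b) (sqrt r) (z \<bullet> b))) \<partial>lborel)"
    by (intro nn_integral_cong)
       (simp add: heat_kernel_eq_prod_normal_density[OF s] heat_kernel_eq_prod_normal_density[OF r]
          prod_ennreal prod.distrib)
  also have "\<dots> = (\<Prod>b\<in>(Basis::(real^'n) set).
      (\<integral>\<^sup>+w. ennreal (normal_density (x \<bullet> b) (sqrt s) w * normal_density (y \<bullet> b) (sqrt r) w) \<partial>lborel))"
    by (rule nn_integral_lborel_prod) auto
  also have "\<dots> = (\<Prod>b\<in>(Basis::(real^'n) set). ennreal (normal_density (x \<bullet> b) (sqrt (s + r)) (y \<bullet> b)))"
    by (intro prod.cong refl nn_integral_normal_density_mult s r)
  also have "\<dots> = ennreal (heat_kernel (s + r) x y)"
    using s r by (simp add: heat_kernel_eq_prod_normal_density prod_ennreal)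
  finally show ?thesis .
qed

lemma
  fixes x :: "real^'n" assumes s: "s > 0"
  shows integrable_heat_kernel: "integrable lborel (heat_kernel s x)"
    and integral_heat_kernel: "(\<integral>z. heat_kernel s x z \<partial>lborel) = 1"
proof -
  show "integrable lborel (heat_kernel s x)"
    using nn_integral_heat_kernel[OF s, of x] by (intro integrableI_nonneg) (auto simp: heat_kernel_nonneg)
  then show "(\<integral>z. heat_kernel s x z \<partial>lborel) = 1"
    using nn_integral_heat_kernel[OF s, of x]
    by (subst (asm) nn_integral_eq_integral) (auto simp: heat_kernel_nonneg)
qed

lemma heat_kernel_le:
  fixes x z :: "real^'n"
  assumes "0 < s" "s \<le> s'"
  shows "heat_kernel s' x z \<le> (2 * pi * s) powr (- real CARD('n) / 2)"
proof -
  have "heat_kernel s' x z \<le> (2 * pi * s') powr (- real CARD('n) / 2)"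
    unfolding heat_kernel_def using assms by (intro mult_left_le) auto
  also have "\<dots> \<le> (2 * pi * s) powr (- real CARD('n) / 2)"
    using assms by (intro powr_mono2') auto
  finally show ?thesis .
qed

section \<open>The generator on bounded functions\<close>

lemma integrable_mult_heat_kernel:
  fixes f :: "real^'n \<Rightarrow> real"
  assumes f[measurable]: "f \<in> borel_measurable lborel" and B: "\<And>z. \<bar>f z\<bar> \<le> B" and s: "s > 0"
  shows "integrable lborel (\<lambda>z. f z * heat_kernel s y z)"
proof (rule Bochner_Integration.integrable_bound[where f="\<lambda>z. B * heat_kernel s y z"])
  show "integrable lborel (\<lambda>z. B * heat_kernel s y z)"
    by (intro integrable_mult_right integrable_heat_kernel s)
  have "\<bar>f z\<bar> * heat_kernel s y z \<le> \<bar>B\<bar> * heat_kernel s y z" for z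
    using B[of z] heat_kernel_nonneg[of s y z] by (intro mult_right_mono) auto
  then show "AE z in lborel. norm (f z * heat_kernel s y z) \<le> norm (B * heat_kernel s y z)"
    using heat_kernel_nonneg[of s y] by (intro AE_I2) (simp add: abs_mult)
qed measurable

lemma abs_integral_mult_heat_kernel_le:
  fixes f :: "real^'n \<Rightarrow> real"
  assumes f[measurable]: "f \<in> borel_measurable lborel" and B: "\<And>z. \<bar>f z\<bar> \<le> B" and s: "s > 0"
  shows "\<bar>\<integral>z. f z * heat_kernel s y z \<partial>lborel\<bar> \<le> B"
proof -
  have "\<bar>\<integral>z. f z * heat_kernel s y z \<partial>lborel\<bar> \<le> (\<integral>z. \<bar>f z * heat_kernel s y z\<bar> \<partial>lborel)"
    by (rule integral_abs_bound)
  also have "\<dots> \<le> (\<integral>z. B * heat_kernel s y z \<partial>lborel)"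
  proof (rule integral_mono)
    show "integrable lborel (\<lambda>z. \<bar>f z * heat_kernel s y z\<bar>)"
      using integrable_mult_heat_kernel[OF f B s] by (rule integrable_abs)
    show "integrable lborel (\<lambda>z. B * heat_kernel s y z)"
      by (intro integrable_mult_right integrable_heat_kernel s)
    show "\<bar>f z * heat_kernel s y z\<bar> \<le> B * heat_kernel s y z" for z
      using B[of z] heat_kernel_nonneg[of s y z] by (simp add: abs_mult mult_right_mono)
  qed
  also have "\<dots> = B"
    using integral_heat_kernel[OF s, of y] by (simp only: integral_mult_right_zero)
  finally show ?thesis .
qed

lemma gen_L_eq:
  fixes f :: "real^'n \<Rightarrow> real"
  assumes f[measurable]: "f \<in> borel_measurable lborel" and B: "\<And>z. \<bar>f z\<bar> \<le> B" and th: "\<theta> > 0"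
  shows "gen_L \<theta> f y = \<theta> * ((\<integral>z. f z * heat_kernel (1 / \<theta>) y z \<partial>lborel) - f y)"
proof -
  have s: "1 / \<theta> > 0" using th by simp
  have "(\<integral>z. (f z - f y) * heat_kernel (1 / \<theta>) y z \<partial>lborel) =
        (\<integral>z. f z * heat_kernel (1 / \<theta>) y z - f y * heat_kernel (1 / \<theta>) y z \<partial>lborel)"
    by (simp add: algebra_simps)
  also have "\<dots> = (\<integral>z. f z * heat_kernel (1 / \<theta>) y z \<partial>lborel) - (\<integral>z. f y * heat_kernel (1 / \<theta>) y z \<partial>lborel)"
    using integrable_mult_heat_kernel[OF f B s] integrable_heat_kernel[OF s]
    by (intro Bochner_Integration.integral_diff) auto
  also have "(\<integral>z. f y * heat_kernel (1 / \<theta>) y z \<partial>lborel) = f y"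
    using integral_heat_kernel[OF s, of y] by (simp only: integral_mult_right_zero)
  finally show ?thesis unfolding gen_L_def by simp
qed

lemma abs_gen_L_le:
  fixes f :: "real^'n \<Rightarrow> real"
  assumes f[measurable]: "f \<in> borel_measurable lborel" and B: "\<And>z. \<bar>f z\<bar> \<le> B" and th: "\<theta> > 0"
  shows "\<bar>gen_L \<theta> f y\<bar> \<le> 2 * \<theta> * B"
proof -
  have "\<bar>\<integral>z. (f z - f y) * heat_kernel (1 / \<theta>) y z \<partial>lborel\<bar> \<le> 2 * B"
  proof (rule abs_integral_mult_heat_kernel_le)
    show "\<bar>f z - f y\<bar> \<le> 2 * B" for z using B[of z] B[of y] by linarith
  qed (use th in auto)
  then show ?thesis unfolding gen_L_def using th by (simp add: abs_mult)
qed

lemma gen_L_diff: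
  fixes f g :: "real^'n \<Rightarrow> real"
  assumes f[measurable]: "f \<in> borel_measurable lborel" and Bf: "\<And>z. \<bar>f z\<bar> \<le> Bf"
    and g[measurable]: "g \<in> borel_measurable lborel" and Bg: "\<And>z. \<bar>g z\<bar> \<le> Bg" and th: "\<theta> > 0"
  shows "gen_L \<theta> (\<lambda>z. f z - g z) y = gen_L \<theta> f y - gen_L \<theta> g y"
proof -
  have s: "1 / \<theta> > 0" using th by simp
  have Bfg: "\<bar>f z - g z\<bar> \<le> Bf + Bg" for z using Bf[of z] Bg[of z] by linarith
  have "(\<integral>z. (f z - g z) * heat_kernel (1 / \<theta>) y z \<partial>lborel) =
     (\<integral>z. f z * heat_kernel (1 / \<theta>) y z - g z * heat_kernel (1 / \<theta>) y z \<partial>lborel)"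
    by (simp add: algebra_simps)
  also have "\<dots> = (\<integral>z. f z * heat_kernel (1 / \<theta>) y z \<partial>lborel) - (\<integral>z. g z * heat_kernel (1 / \<theta>) y z \<partial>lborel)"
    using integrable_mult_heat_kernel[OF f Bf s] integrable_mult_heat_kernel[OF g Bg s]
    by (intro Bochner_Integration.integral_diff) auto
  finally have integral_diff: "(\<integral>z. (f z - g z) * heat_kernel (1 / \<theta>) y z \<partial>lborel) =
     (\<integral>z. f z * heat_kernel (1 / \<theta>) y z \<partial>lborel) - (\<integral>z. g z * heat_kernel (1 / \<theta>) y z \<partial>lborel)" .
  have fg: "(\<lambda>z. f z - g z) \<in> borel_measurable lborel" by measurable
  show ?thesis
    unfolding gen_L_eq[OF f Bf th] gen_L_eq[OF g Bg th] gen_L_eq[OF fg Bfg th] integral_diff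
    by (simp add: algebra_simps)
qed

section \<open>Uniqueness of bounded solutions\<close>

lemma increasing_of_deriv_nonneg_within:
  fixes h h' :: "real \<Rightarrow> real"
  assumes t: "0 \<le> t" and d: "\<And>s. s \<in> {0..t} \<Longrightarrow> (h has_real_derivative h' s) (at s within {0..})"
    and nonneg: "\<And>s. s \<in> {0..t} \<Longrightarrow> h' s \<ge> 0"
  shows "h 0 \<le> h t"
proof (rule DERIV_nonneg_imp_increasing_open[OF t])
  fix x assume x: "0 < x" "x < t"
  then have "at x within {0..} = at x" by (intro at_within_interior) auto
  then show "\<exists>y. (h has_real_derivative y) (at x) \<and> 0 \<le> y"
    using d[of x] nonneg[of x] x by auto
next
  have "continuous (at s within {0..t}) h" if "s \<in> {0..t}" for s
    using DERIV_continuous[OF d[OF that]] by (rule continuous_within_subset) auto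
  then show "continuous_on {0..t} h"
    by (simp add: continuous_on_eq_continuous_within)
qed

lemma abs_le_of_deriv_abs_le:
  fixes f g f' g' :: "real \<Rightarrow> real"
  assumes t: "0 \<le> t"
    and df: "\<And>s. s \<in> {0..t} \<Longrightarrow> (f has_real_derivative f' s) (at s within {0..})"
    and dg: "\<And>s. s \<in> {0..t} \<Longrightarrow> (g has_real_derivative g' s) (at s within {0..})"
    and le: "\<And>s. s \<in> {0..t} \<Longrightarrow> \<bar>f' s\<bar> \<le> g' s"
    and "f 0 = 0" and "g 0 = 0"
  shows "\<bar>f t\<bar> \<le> g t"
proof -
  have "0 \<le> g' s - f' s" "0 \<le> g' s + f' s" if "s \<in> {0..t}" for s
    using le[OF that] by (auto simp: abs_le_iff)
  then have "(\<lambda>s. g s - f s) 0 \<le> (\<lambda>s. g s - f s) t" and "(\<lambda>s. g s + f s) 0 \<le> (\<lambda>s. g s + f s) t"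
    by (auto intro!: increasing_of_deriv_nonneg_within[OF t] DERIV_diff DERIV_add df dg)
  then show ?thesis using assms(5,6) by auto
qed

lemma solves_generator_eqD:
  assumes "solves_generator_eq \<theta> f \<psi>"
  shows "\<psi> 0 = f"
    and "\<And>t. t \<ge> 0 \<Longrightarrow> \<psi> t \<in> borel_measurable lborel"
    and "\<And>T. T \<ge> 0 \<Longrightarrow> \<exists>B. \<forall>t\<in>{0..T}. \<forall>y. \<bar>\<psi> t y\<bar> \<le> B"
    and "\<And>t y. t \<ge> 0 \<Longrightarrow> ((\<lambda>s. \<psi> s y) has_real_derivative gen_L \<theta> (\<psi> t) y) (at t within {0..})"
  using assms unfolding solves_generator_eq_def by auto

lemma solves_generator_eq_diff:
  assumes th: "\<theta> > 0" and \<psi>: "solves_generator_eq \<theta> f \<psi>" and \<phi>: "solves_generator_eq \<theta> g \<phi>"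
  shows "solves_generator_eq \<theta> (\<lambda>y. f y - g y) (\<lambda>t y. \<psi> t y - \<phi> t y)"
proof -
  note \<psi>D = solves_generator_eqD[OF \<psi>] and \<phi>D = solves_generator_eqD[OF \<phi>]
  have bounded: "\<exists>B. \<forall>t\<in>{0..T}. \<forall>y. \<bar>\<psi> t y - \<phi> t y\<bar> \<le> B" if T: "T \<ge> 0" for T :: real
  proof -
    obtain B1 where B1: "\<forall>t\<in>{0..T}. \<forall>y. \<bar>\<psi> t y\<bar> \<le> B1" using \<psi>D(3)[OF T] by blast
    obtain B2 where B2: "\<forall>t\<in>{0..T}. \<forall>y. \<bar>\<phi> t y\<bar> \<le> B2" using \<phi>D(3)[OF T] by blast
    have "\<bar>\<psi> t y - \<phi> t y\<bar> \<le> B1 + B2" if "t \<in> {0..T}" for t y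
    proof -
      have "\<bar>\<psi> t y\<bar> \<le> B1" "\<bar>\<phi> t y\<bar> \<le> B2" using B1 B2 that by blast+
      then show ?thesis by linarith
    qed
    then show ?thesis by blast
  qed
  have deriv: "((\<lambda>s. \<psi> s y - \<phi> s y) has_real_derivative gen_L \<theta> (\<lambda>y. \<psi> t y - \<phi> t y) y)
      (at t within {0..})" if t: "t \<ge> 0" for t y
  proof -
    obtain B1 where B1: "\<forall>s\<in>{0..t}. \<forall>y. \<bar>\<psi> s y\<bar> \<le> B1" using \<psi>D(3)[OF t] by blast
    obtain B2 where B2: "\<forall>s\<in>{0..t}. \<forall>y. \<bar>\<phi> s y\<bar> \<le> B2" using \<phi>D(3)[OF t] by blast
    have "gen_L \<theta> (\<lambda>y. \<psi> t y - \<phi> t y) y = gen_L \<theta> (\<psi> t) y - gen_L \<theta> (\<phi> t) y"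
      by (rule gen_L_diff[OF \<psi>D(2)[OF t] _ \<phi>D(2)[OF t] _ th]) (use B1 B2 t in auto)
    then show ?thesis using \<psi>D(4)[OF t] \<phi>D(4)[OF t] by (auto intro: DERIV_diff)
  qed
  have "(\<lambda>y. \<psi> t y - \<phi> t y) \<in> borel_measurable lborel" if "t \<ge> 0" for t
    using \<psi>D(2)[OF that] \<phi>D(2)[OF that] by measurable
  then show ?thesis
    unfolding solves_generator_eq_def using \<psi>D(1) \<phi>D(1) bounded deriv by auto
qed

text \<open>Since \<open>L\<^sup>\<theta>\<close> has norm at most \<open>2\<theta>\<close> on bounded functions, iterating the equation
  gives the Picard bounds of the exponential series.\<close>
lemma solves_generator_eq_zero_iterate_bound:
  fixes \<phi> :: "real \<Rightarrow> real^'n \<Rightarrow> real"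
  assumes th: "\<theta> > 0" and \<phi>: "solves_generator_eq \<theta> (\<lambda>_. 0) \<phi>"
    and B: "\<And>s y. s \<in> {0..t} \<Longrightarrow> \<bar>\<phi> s y\<bar> \<le> B"
  shows "s \<in> {0..t} \<Longrightarrow> \<bar>\<phi> s y\<bar> \<le> B * (2 * \<theta> * s) ^ k / fact k"
proof (induction k arbitrary: s y)
  case 0 then show ?case using B by simp
next
  case (Suc k)
  note \<phi>D = solves_generator_eqD[OF \<phi>]
  define C where "C = B * (2 * \<theta>) ^ Suc k / fact (Suc k)"
  have "\<bar>\<phi> s y\<bar> \<le> C * s ^ Suc k"
  proof (rule abs_le_of_deriv_abs_le[where f="\<lambda>r. \<phi> r y" and g="\<lambda>r. C * r ^ Suc k"
        and f'="\<lambda>r. gen_L \<theta> (\<phi> r) y"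
        and g'="\<lambda>r. 2 * \<theta> * (B * (2 * \<theta> * r) ^ k / fact k)"])
    show "0 \<le> s" using Suc.prems by simp
    show "\<phi> 0 y = 0" using \<phi>D(1) by simp
    fix r assume r: "r \<in> {0..s}"
    then have r': "r \<in> {0..t}" using Suc.prems by auto
    show "((\<lambda>s. \<phi> s y) has_real_derivative gen_L \<theta> (\<phi> r) y) (at r within {0..})"
      using \<phi>D(4) r by simp
    show "\<bar>gen_L \<theta> (\<phi> r) y\<bar> \<le> 2 * \<theta> * (B * (2 * \<theta> * r) ^ k / fact k)"
      by (rule abs_gen_L_le[OF \<phi>D(2) Suc.IH[OF r'] th]) (use r in simp)
    have "C * (real (Suc k) * r ^ k) = 2 * \<theta> * (B * (2 * \<theta> * r) ^ k / fact k)"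
      unfolding C_def by (simp add: power_mult_distrib fact_Suc field_simps del: of_nat_Suc)
    then show "((\<lambda>s. C * s ^ Suc k) has_real_derivative
        2 * \<theta> * (B * (2 * \<theta> * r) ^ k / fact k)) (at r within {0..})"
      using DERIV_cmult[OF DERIV_pow[of "Suc k" r "{0..}"], of C] by simp
  qed simp
  also have "\<dots> = B * (2 * \<theta> * s) ^ Suc k / fact (Suc k)"
    unfolding C_def by (simp add: power_mult_distrib)
  finally show ?case .
qed

lemma solves_generator_eq_zero_unique:
  fixes \<phi> :: "real \<Rightarrow> real^'n \<Rightarrow> real"
  assumes th: "\<theta> > 0" and \<phi>: "solves_generator_eq \<theta> (\<lambda>_. 0) \<phi>" and t: "t \<ge> 0"
  shows "\<phi> t y = 0"
proof -
  obtain B where B: "\<And>s y. s \<in> {0..t} \<Longrightarrow> \<bar>\<phi> s y\<bar> \<le> B"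
    using solves_generator_eqD(3)[OF \<phi> t] by blast
  have "(\<lambda>k. (2 * \<theta> * t) ^ k / fact k) \<longlonglongrightarrow> 0"
    using summable_LIMSEQ_zero[OF summable_exp[of "2 * \<theta> * t"]] by (simp add: divide_inverse mult.commute)
  then have "(\<lambda>k. B * ((2 * \<theta> * t) ^ k / fact k)) \<longlonglongrightarrow> B * 0"
    by (intro tendsto_mult tendsto_const)
  moreover have "\<bar>\<phi> t y\<bar> \<le> B * ((2 * \<theta> * t) ^ k / fact k)" for k
    using solves_generator_eq_zero_iterate_bound[where t=t and s=t and y=y and k=k, OF th \<phi> B] t by simp
  ultimately have "\<bar>\<phi> t y\<bar> \<le> B * 0"
    by (intro LIMSEQ_le_const) auto
  then show ?thesis by simp
qed

lemma solves_generator_eq_unique: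
  assumes th: "\<theta> > 0" and "solves_generator_eq \<theta> f \<psi>" "solves_generator_eq \<theta> f \<phi>" and t: "t \<ge> 0"
  shows "\<psi> t y = \<phi> t (y::real^'n)"
  using solves_generator_eq_zero_unique[OF th _ t, of "\<lambda>t y. \<psi> t y - \<phi> t y" y]
    solves_generator_eq_diff[OF assms(1-3)] by simp

section \<open>Poisson averages\<close>

definition poisson_avg :: "real \<Rightarrow> (nat \<Rightarrow> real) \<Rightarrow> real" where
  "poisson_avg l a = (\<Sum>k. l ^ k / fact k * exp (- l) * a k)"

lemma summable_exp_series_bounded:
  fixes a :: "nat \<Rightarrow> real"
  assumes A: "\<And>k. \<bar>a k\<bar> \<le> A"
  shows "summable (\<lambda>k. a k / fact k * l ^ k)"
proof (rule summable_comparison_test'[where g="\<lambda>k. A * (inverse (fact k) * \<bar>l\<bar> ^ k)"])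
  show "summable (\<lambda>k. A * (inverse (fact k) * \<bar>l\<bar> ^ k))"
    by (intro summable_mult summable_exp)
  fix k :: nat
  have "\<bar>a k\<bar> * \<bar>l\<bar> ^ k / fact k \<le> A * \<bar>l\<bar> ^ k / fact k"
    using A[of k] by (intro divide_right_mono mult_right_mono) auto
  then show "norm (a k / fact k * l ^ k) \<le> A * (inverse (fact k) * \<bar>l\<bar> ^ k)"
    by (simp add: abs_mult power_abs divide_inverse mult_ac)
qed

lemma summable_poisson_avg:
  fixes a :: "nat \<Rightarrow> real"
  assumes "\<And>k. \<bar>a k\<bar> \<le> A"
  shows "summable (\<lambda>k. l ^ k / fact k * exp (- l) * a k)"
  using summable_mult[OF summable_exp_series_bounded[of a A l, OF assms], of "exp (- l)"] by (simp add: mult_ac)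

lemma poisson_avg_eq_exp_mult:
  fixes a :: "nat \<Rightarrow> real"
  assumes A: "\<And>k. \<bar>a k\<bar> \<le> A"
  shows "poisson_avg l a = exp (- l) * (\<Sum>k. a k / fact k * l ^ k)"
  using suminf_mult[OF summable_exp_series_bounded[of a A l, OF A], of "exp (- l)"]
  unfolding poisson_avg_def by (simp add: mult_ac)

lemma poisson_avg_0 [simp]: "poisson_avg 0 a = a 0"
proof -
  have "(\<lambda>k. (0::real) ^ k / fact k * exp (- 0) * a k) = (\<lambda>k. if k = 0 then a k else 0)"
    by (auto simp: fun_eq_iff)
  then show ?thesis unfolding poisson_avg_def using sums_single[of 0 a] by (simp add: sums_iff)
qed

lemma poisson_avg_const [simp]: "poisson_avg l (\<lambda>_. c) = c"
proof -
  have "(\<lambda>k. l ^ k / fact k) sums exp l"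
    using exp_converges[of l] by (simp add: divide_inverse mult.commute)
  then have "(\<lambda>k. l ^ k / fact k * (exp (- l) * c)) sums (exp l * (exp (- l) * c))"
    by (rule sums_mult2)
  then show ?thesis
    unfolding poisson_avg_def by (simp add: sums_iff mult_ac exp_minus)
qed

lemma poisson_avg_cmult:
  fixes a :: "nat \<Rightarrow> real"
  assumes "\<And>k. \<bar>a k\<bar> \<le> A"
  shows "poisson_avg l (\<lambda>k. c * a k) = c * poisson_avg l a"
  unfolding poisson_avg_def using suminf_mult[OF summable_poisson_avg[of a A l, OF assms], of c]
  by (simp add: mult_ac)

lemma poisson_avg_add:
  fixes a b :: "nat \<Rightarrow> real"
  assumes "\<And>k. \<bar>a k\<bar> \<le> A" and "\<And>k. \<bar>b k\<bar> \<le> B"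
  shows "poisson_avg l (\<lambda>k. a k + b k) = poisson_avg l a + poisson_avg l b"
  unfolding poisson_avg_def
  using suminf_add[OF summable_poisson_avg[of a A l, OF assms(1)] summable_poisson_avg[of b B l, OF assms(2)]]
  by (simp add: distrib_left)

lemma poisson_avg_mono:
  fixes a b :: "nat \<Rightarrow> real"
  assumes "l \<ge> 0" and "\<And>k. a k \<le> b k" and "\<And>k. \<bar>a k\<bar> \<le> A" and "\<And>k. \<bar>b k\<bar> \<le> B"
  shows "poisson_avg l a \<le> poisson_avg l b"
  unfolding poisson_avg_def
  using assms by (intro suminf_le summable_poisson_avg mult_left_mono) auto

lemma
  fixes a :: "nat \<Rightarrow> real"
  assumes l: "l \<ge> 0" and a: "\<And>k. 0 \<le> a k" "\<And>k. a k \<le> A"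
  shows poisson_avg_nonneg: "0 \<le> poisson_avg l a"
    and poisson_avg_le: "poisson_avg l a \<le> A"
proof -
  have A: "\<bar>a k\<bar> \<le> A" for k using a[of k] by simp
  show "0 \<le> poisson_avg l a"
    using poisson_avg_mono[of l "\<lambda>_. 0" a 0 A] l a(1) A by simp
  show "poisson_avg l a \<le> A"
    using poisson_avg_mono[OF l a(2) A, of "\<bar>A\<bar>"] by simp
qed

lemma has_real_derivative_poisson_avg:
  fixes a :: "nat \<Rightarrow> real"
  assumes A: "\<And>k. \<bar>a k\<bar> \<le> A"
  shows "((\<lambda>t. poisson_avg (\<theta> * t) a) has_real_derivative
           \<theta> * (poisson_avg (\<theta> * t) (\<lambda>k. a (Suc k)) - poisson_avg (\<theta> * t) a)) (at t within S)"
proof -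
  define c where "c k = a k / fact k" for k
  have A': "\<And>k. \<bar>a (Suc k)\<bar> \<le> A" using A by auto
  have "summable (\<lambda>k. c k * z ^ k)" for z
    unfolding c_def by (rule summable_exp_series_bounded[OF A])
  moreover have "diffs c = (\<lambda>k. a (Suc k) / fact k)"
    unfolding diffs_def c_def by (auto simp: fun_eq_iff fact_Suc field_simps simp del: of_nat_Suc)
  ultimately have "((\<lambda>z. \<Sum>k. c k * z ^ k) has_real_derivative (\<Sum>k. a (Suc k) / fact k * z ^ k)) (at z)" for z
    using termdiffs_strong_converges_everywhere by metis
  from DERIV_chain2[OF this DERIV_cmult_Id]
  have "((\<lambda>t. exp (- (\<theta> * t)) * (\<Sum>k. c k * (\<theta> * t) ^ k)) has_real_derivative
      exp (- (\<theta> * t)) * - \<theta> * (\<Sum>k. c k * (\<theta> * t) ^ k) +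
      (\<Sum>k. a (Suc k) / fact k * (\<theta> * t) ^ k) * \<theta> * exp (- (\<theta> * t))) (at t within S)"
    by (intro DERIV_mult) (auto intro!: derivative_eq_intros)
  then show ?thesis
    unfolding poisson_avg_eq_exp_mult[OF A] poisson_avg_eq_exp_mult[OF A'] c_def
    by (simp add: algebra_simps)
qed

lemma ennreal_poisson_avg:
  fixes a :: "nat \<Rightarrow> real"
  assumes l: "l \<ge> 0" and a: "\<And>k. 0 \<le> a k" "\<And>k. a k \<le> A"
  shows "ennreal (poisson_avg l a) = (\<Sum>k. ennreal (l ^ k / fact k * exp (- l) * a k))"
proof -
  have "\<bar>a k\<bar> \<le> A" for k using a[of k] by simp
  then show ?thesis
    unfolding poisson_avg_def using l a by (intro suminf_ennreal2[symmetric] summable_poisson_avg) auto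
qed

lemma integral_poisson_pmf:
  fixes g :: "nat \<Rightarrow> real"
  assumes r: "r > 0" and g: "\<And>k. 0 \<le> g k" "\<And>k. g k \<le> A"
  shows "(\<integral>k. g k \<partial>measure_pmf (poisson_pmf r)) = poisson_avg r g"
proof -
  have "integrable (measure_pmf (poisson_pmf r)) g"
    by (rule measure_pmf.integrable_const_bound[where B=A]) (use g in auto)
  then have "ennreal (\<integral>k. g k \<partial>measure_pmf (poisson_pmf r))
      = (\<integral>\<^sup>+k. ennreal (g k) \<partial>measure_pmf (poisson_pmf r))"
    using g by (subst nn_integral_eq_integral) auto
  also have "\<dots> = (\<integral>\<^sup>+k. ennreal (pmf (poisson_pmf r) k) * ennreal (g k) \<partial>count_space UNIV)"
    by (rule nn_integral_measure_pmf)
  also have "\<dots> = ennreal (poisson_avg r g)"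
    using r g by (simp add: ennreal_poisson_avg[OF _ g] nn_integral_count_space_nat ennreal_mult[symmetric])
  finally show ?thesis
    using g r by (subst (asm) ennreal_inj) (auto intro!: integral_nonneg_AE poisson_avg_nonneg)
qed

lemma integral_rate_one_poisson_process:
  fixes g :: "nat \<Rightarrow> real"
  assumes N: "rate_one_poisson_process M N" and s: "s \<ge> 0" and g: "\<And>k. 0 \<le> g k" "\<And>k. g k \<le> A"
  shows "(\<integral>\<omega>. g (N s \<omega>) \<partial>M) = poisson_avg s g"
proof (cases "s = 0")
  case True
  have M: "prob_space M" and N0: "\<And>\<omega>. \<omega> \<in> space M \<Longrightarrow> N 0 \<omega> = 0"
    using N unfolding rate_one_poisson_process_def by auto
  have "(\<integral>\<omega>. g (N s \<omega>) \<partial>M) = (\<integral>\<omega>. g 0 \<partial>M)"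
    using True N0 by (intro Bochner_Integration.integral_cong) auto
  also have "\<dots> = g 0"
    using prob_space.prob_space[OF M] by simp
  finally show ?thesis using True by simp
next
  case False
  with s have s: "s > 0" by simp
  have measurable: "N s \<in> measurable M (count_space UNIV)"
    and "\<And>\<omega>. \<omega> \<in> space M \<Longrightarrow> N 0 \<omega> = 0"
    and increment: "distr M (count_space UNIV) (\<lambda>\<omega>. N s \<omega> - N 0 \<omega>) = measure_pmf (poisson_pmf s)"
    using N s unfolding rate_one_poisson_process_def by auto
  then have "distr M (count_space UNIV) (N s) = distr M (count_space UNIV) (\<lambda>\<omega>. N s \<omega> - N 0 \<omega>)"
    by (intro distr_cong) auto
  with increment have "distr M (count_space UNIV) (N s) = measure_pmf (poisson_pmf s)"
    by simp
  then have "(\<integral>\<omega>. g (N s \<omega>) \<partial>M) = (\<integral>k. g k \<partial>measure_pmf (poisson_pmf s))"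
    using measurable by (subst integral_distr[symmetric]) auto
  then show ?thesis using integral_poisson_pmf[OF s g] by simp
qed

section \<open>The Poisson mixture of heat kernels\<close>

definition poisson_heat :: "real \<Rightarrow> real \<Rightarrow> real^'n \<Rightarrow> real \<Rightarrow> real^'n \<Rightarrow> real" where
  "poisson_heat \<epsilon> \<theta> x t y = poisson_avg (\<theta> * t) (\<lambda>k. heat_kernel (\<epsilon>^2 + real k / \<theta>) x y)"

lemma heat_kernel_shifted_le:
  assumes "\<epsilon> > 0" "\<theta> > 0"
  shows "heat_kernel (\<epsilon>^2 + real k / \<theta>) (x::real^'n) y \<le> (2 * pi * \<epsilon>^2) powr (- (real CARD('n) / 2))"
  using heat_kernel_le[of "\<epsilon>^2" "\<epsilon>^2 + real k / \<theta>" x y] assms by simp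

lemma abs_heat_kernel_shifted_le:
  assumes "\<epsilon> > 0" "\<theta> > 0"
  shows "\<bar>heat_kernel (\<epsilon>^2 + real k / \<theta>) (x::real^'n) y\<bar> \<le> (2 * pi * \<epsilon>^2) powr (- (real CARD('n) / 2))"
  using heat_kernel_shifted_le[OF assms, of k x y] heat_kernel_nonneg[of "\<epsilon>^2 + real k / \<theta>" x y]
  by linarith

lemma
  assumes "\<epsilon> > 0" "\<theta> > 0" "t \<ge> 0"
  shows poisson_heat_nonneg: "0 \<le> poisson_heat \<epsilon> \<theta> (x::real^'n) t y"
    and poisson_heat_le: "poisson_heat \<epsilon> \<theta> x t y \<le> (2 * pi * \<epsilon>^2) powr (- (real CARD('n) / 2))"
  unfolding poisson_heat_def using assms
  by (auto intro!: poisson_avg_nonneg poisson_avg_le heat_kernel_nonneg heat_kernel_shifted_le)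

lemma borel_measurable_poisson_heat [measurable]: "poisson_heat \<epsilon> \<theta> x t \<in> borel_measurable lborel"
  unfolding poisson_heat_def poisson_avg_def by measurable

lemma poisson_heat_0: "poisson_heat \<epsilon> \<theta> x 0 = heat_kernel (\<epsilon>^2) x"
  unfolding poisson_heat_def by (simp add: fun_eq_iff)

text \<open>Monotone convergence exchanges sum and integral; each term is Chapman--Kolmogorov.\<close>
lemma nn_integral_poisson_heat_mult_heat_kernel:
  assumes e: "\<epsilon> > 0" and th: "\<theta> > 0" and t: "t \<ge> 0"
  shows "(\<integral>\<^sup>+z. ennreal (poisson_heat \<epsilon> \<theta> (x::real^'n) t z * heat_kernel (1 / \<theta>) y z) \<partial>lborel)
    = ennreal (poisson_avg (\<theta> * t) (\<lambda>k. heat_kernel (\<epsilon>^2 + real (Suc k) / \<theta>) x y))"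
proof -
  define l where "l = \<theta> * t"
  have l: "l \<ge> 0" using th t by (simp add: l_def)
  define w where "w k = l ^ k / fact k * exp (- l)" for k
  define p where "p k z = heat_kernel (\<epsilon>^2 + real k / \<theta>) x z" for k z
  define A where "A = (2 * pi * \<epsilon>^2) powr (- (real CARD('n) / 2))"
  define h where "h z = heat_kernel (1 / \<theta>) y z" for z
  have p: "0 \<le> p k z" "p k z \<le> A" for k z
    unfolding p_def A_def by (rule heat_kernel_nonneg, rule heat_kernel_shifted_le[OF e th])
  have h: "0 \<le> h z" for z unfolding h_def by (rule heat_kernel_nonneg)
  have "ennreal (poisson_heat \<epsilon> \<theta> x t z * h z) = (\<Sum>k. ennreal (w k * (p k z * h z)))" for z
  proof -
    have "poisson_heat \<epsilon> \<theta> x t z * h z = poisson_avg l (\<lambda>k. h z * p k z)"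
      using p by (subst poisson_avg_cmult[of _ A]) (auto simp: poisson_heat_def p_def l_def)
    also have "ennreal \<dots> = (\<Sum>k. ennreal (w k * (p k z * h z)))"
    proof (subst ennreal_poisson_avg[OF l])
      show "h z * p k z \<le> h z * A" for k using p h by (simp add: mult_left_mono)
    qed (use p h in \<open>auto simp: w_def mult_ac\<close>)
    finally show ?thesis .
  qed
  then have "(\<integral>\<^sup>+z. ennreal (poisson_heat \<epsilon> \<theta> x t z * h z) \<partial>lborel)
      = (\<Sum>k. \<integral>\<^sup>+z. ennreal (w k * (p k z * h z)) \<partial>lborel)"
    by (simp add: p_def h_def nn_integral_suminf)
  also have "\<dots> = (\<Sum>k. ennreal (w k * p (Suc k) y))"
  proof (intro suminf_cong)
    fix k
    have w: "w k \<ge> 0" using l by (simp add: w_def)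
    have "\<epsilon>^2 + real k / \<theta> > 0" using e th by (simp add: add_pos_nonneg)
    from nn_integral_heat_kernel_mult[OF this, of "1 / \<theta>" x y] th
    have "(\<integral>\<^sup>+z. ennreal (p k z * h z) \<partial>lborel) = ennreal (p (Suc k) y)"
      by (simp add: p_def h_def add_divide_distrib add_ac)
    moreover have "(\<integral>\<^sup>+z. ennreal (w k * (p k z * h z)) \<partial>lborel)
        = ennreal (w k) * (\<integral>\<^sup>+z. ennreal (p k z * h z) \<partial>lborel)"
      using w p h by (subst nn_integral_cmult[symmetric]) (auto simp: ennreal_mult' p_def h_def)
    ultimately show "(\<integral>\<^sup>+z. ennreal (w k * (p k z * h z)) \<partial>lborel) = ennreal (w k * p (Suc k) y)"
      using w p by (simp add: ennreal_mult')
  qed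
  also have "\<dots> = ennreal (poisson_avg l (\<lambda>k. p (Suc k) y))"
    using p l by (subst ennreal_poisson_avg[of _ _ A]) (auto simp: w_def)
  finally show ?thesis by (simp add: l_def p_def h_def)
qed

lemma gen_L_poisson_heat:
  assumes e: "\<epsilon> > 0" and th: "\<theta> > 0" and t: "t \<ge> 0"
  shows "gen_L \<theta> (poisson_heat \<epsilon> \<theta> (x::real^'n) t) y =
    \<theta> * (poisson_avg (\<theta> * t) (\<lambda>k. heat_kernel (\<epsilon>^2 + real (Suc k) / \<theta>) x y) - poisson_heat \<epsilon> \<theta> x t y)"
proof -
  define A where "A = (2 * pi * \<epsilon>^2) powr (- (real CARD('n) / 2))"
  have bound: "\<bar>poisson_heat \<epsilon> \<theta> x t z\<bar> \<le> A" for z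
    using poisson_heat_nonneg[OF e th t, of x z] poisson_heat_le[OF e th t, of x z] unfolding A_def by simp
  have s: "1 / \<theta> > 0" using th by simp
  have "ennreal (\<integral>z. poisson_heat \<epsilon> \<theta> x t z * heat_kernel (1 / \<theta>) y z \<partial>lborel)
      = ennreal (poisson_avg (\<theta> * t) (\<lambda>k. heat_kernel (\<epsilon>^2 + real (Suc k) / \<theta>) x y))"
    using integrable_mult_heat_kernel[OF borel_measurable_poisson_heat bound s] poisson_heat_nonneg[OF e th t]
    by (subst nn_integral_eq_integral[symmetric])
       (auto intro!: AE_I2 mult_nonneg_nonneg
         simp: heat_kernel_nonneg nn_integral_poisson_heat_mult_heat_kernel[OF e th t])
  moreover have "0 \<le> (\<integral>z. poisson_heat \<epsilon> \<theta> x t z * heat_kernel (1 / \<theta>) y z \<partial>lborel)"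
    using poisson_heat_nonneg[OF e th t] by (intro integral_nonneg_AE AE_I2 mult_nonneg_nonneg heat_kernel_nonneg)
  moreover have "0 \<le> poisson_avg (\<theta> * t) (\<lambda>k. heat_kernel (\<epsilon>^2 + real (Suc k) / \<theta>) x y)"
    using th t heat_kernel_shifted_le[OF e th, of "Suc _" x y]
    by (intro poisson_avg_nonneg heat_kernel_nonneg) auto
  ultimately have "(\<integral>z. poisson_heat \<epsilon> \<theta> x t z * heat_kernel (1 / \<theta>) y z \<partial>lborel)
      = poisson_avg (\<theta> * t) (\<lambda>k. heat_kernel (\<epsilon>^2 + real (Suc k) / \<theta>) x y)"
    by simp
  then show ?thesis
    using gen_L_eq[OF borel_measurable_poisson_heat bound th] by simp
qed

lemma solves_generator_eq_poisson_heat: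
  assumes e: "\<epsilon> > 0" and th: "\<theta> > 0"
  shows "solves_generator_eq \<theta> (heat_kernel (\<epsilon>^2) x) (poisson_heat \<epsilon> \<theta> (x::real^'n))"
  unfolding solves_generator_eq_def
proof (intro conjI allI impI)
  show "poisson_heat \<epsilon> \<theta> x 0 = heat_kernel (\<epsilon>^2) x" by (rule poisson_heat_0)
  show "\<exists>B. \<forall>t\<in>{0..T}. \<forall>y. \<bar>poisson_heat \<epsilon> \<theta> x t y\<bar> \<le> B" for T
  proof (intro exI ballI allI)
    fix t y assume "t \<in> {0..T}"
    then show "\<bar>poisson_heat \<epsilon> \<theta> x t y\<bar> \<le> (2 * pi * \<epsilon>^2) powr (- (real CARD('n) / 2))"
      using poisson_heat_nonneg[OF e th, of t x y] poisson_heat_le[OF e th, of t x y] by simp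
  qed
  fix y :: "real^'n" and t :: real assume t: "t \<ge> 0"
  show "((\<lambda>s. poisson_heat \<epsilon> \<theta> x s y) has_real_derivative gen_L \<theta> (poisson_heat \<epsilon> \<theta> x t) y)
      (at t within {0..})"
    unfolding gen_L_poisson_heat[OF e th t] poisson_heat_def
    by (rule has_real_derivative_poisson_avg) (rule abs_heat_kernel_shifted_le[OF e th])
qed simp

section \<open>Decay of the Poisson mixture\<close>

lemma fact_add_le: "fact (k + D) \<le> (fact k :: real) * (real k + real D) ^ D"
proof (induction D)
  case 0 then show ?case by simp
next
  case (Suc D)
  have "fact (k + Suc D) = (real k + real D + 1) * (fact (k + D) :: real)"
    by (simp add: algebra_simps)
  also have "\<dots> \<le> (real k + real D + 1) * (fact k * (real k + real D) ^ D)"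
    by (intro mult_left_mono Suc.IH) auto
  also have "\<dots> \<le> (real k + real D + 1) * (fact k * (real k + real D + 1) ^ D)"
    by (intro mult_left_mono power_mono) auto
  also have "\<dots> = fact k * (real k + real (Suc D)) ^ Suc D"
    by (simp add: algebra_simps)
  finally show ?case .
qed

lemma
  fixes l :: real assumes l: "l \<ge> 0"
  shows summable_exp_series_shift: "summable (\<lambda>k. l ^ (k + D) / fact (k + D))"
    and suminf_exp_series_shift_le: "(\<Sum>k. l ^ (k + D) / fact (k + D)) \<le> exp l"
proof -
  have exp: "(\<lambda>k. l ^ k / fact k) sums exp l"
    using exp_converges[of l] by (simp add: divide_inverse mult.commute)
  then have summable: "summable (\<lambda>k. l ^ k / fact k)" by (simp add: sums_iff)
  then show "summable (\<lambda>k. l ^ (k + D) / fact (k + D))"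
    by (subst summable_iff_shift[where f="\<lambda>k. l ^ k / fact k"])
  have "exp l = (\<Sum>k. l ^ (k + D) / fact (k + D)) + (\<Sum>i<D. l ^ i / fact i)"
    using suminf_split_initial_segment[OF summable, of D] exp by (simp add: sums_iff)
  moreover have "(\<Sum>i<D. l ^ i / fact i) \<ge> 0" using l by (intro sum_nonneg) auto
  ultimately show "(\<Sum>k. l ^ (k + D) / fact (k + D)) \<le> exp l" by linarith
qed

text \<open>Since \<open>(k + D)\<^sup>D \<ge> (k + D)! / k!\<close>, this follows from
  \<open>E [N! / (N + D)!] = l\<^sup>-\<^sup>D P(N' \<ge> D) \<le> l\<^sup>-\<^sup>D\<close> for \<open>N, N'\<close> Poisson with mean \<open>l\<close>.\<close>
lemma poisson_avg_inverse_power_le: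
  fixes l :: real assumes l: "l > 0"
  shows "poisson_avg l (\<lambda>k. 1 / (real k + real D) ^ D) \<le> 1 / l ^ D"
proof -
  have "\<bar>1 / (real k + real D) ^ D\<bar> \<le> 1" for k
    by (cases "k = 0 \<and> D = 0") (auto simp: one_le_power)
  then have summable: "summable (\<lambda>k. l ^ k / fact k * exp (- l) * (1 / (real k + real D) ^ D))"
    by (rule summable_poisson_avg)
  have term_le: "l ^ k / fact k * exp (- l) * (1 / (real k + real D) ^ D)
      \<le> exp (- l) / l ^ D * (l ^ (k + D) / fact (k + D))" for k
  proof -
    have "1 / (real k + real D) ^ D \<le> fact k / fact (k + D)"
    proof (cases "k = 0 \<and> D = 0")
      case False
      then have "(real k + real D) ^ D > 0" by auto
      then show ?thesis using fact_add_le[of k D] by (simp add: divide_simps mult.commute)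
    qed simp
    then have "l ^ k / fact k * exp (- l) * (1 / (real k + real D) ^ D) \<le>
        l ^ k / fact k * exp (- l) * (fact k / fact (k + D))"
      using l by (intro mult_left_mono) auto
    also have "\<dots> = exp (- l) / l ^ D * (l ^ (k + D) / fact (k + D))"
      using l by (simp add: power_add field_simps)
    finally show ?thesis .
  qed
  have "poisson_avg l (\<lambda>k. 1 / (real k + real D) ^ D) \<le> (\<Sum>k. exp (- l) / l ^ D * (l ^ (k + D) / fact (k + D)))"
    unfolding poisson_avg_def using l
    by (intro suminf_le summable summable_mult summable_exp_series_shift term_le) auto
  also have "\<dots> = exp (- l) / l ^ D * (\<Sum>k. l ^ (k + D) / fact (k + D))"
    using l by (intro suminf_mult summable_exp_series_shift) auto
  also have "\<dots> \<le> exp (- l) / l ^ D * exp l"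
    using l by (intro mult_left_mono suminf_exp_series_shift_le) auto
  also have "\<dots> = 1 / l ^ D" by (simp add: exp_minus field_simps)
  finally show ?thesis .
qed

lemma poisson_avg_sqrt_le:
  fixes Y :: "nat \<Rightarrow> real"
  assumes l: "l \<ge> 0" and Y: "\<And>k. 0 \<le> Y k" "\<And>k. Y k \<le> M"
    and B: "B > 0" "poisson_avg l Y \<le> B"
  shows "poisson_avg l (\<lambda>k. sqrt (Y k)) \<le> sqrt B"
proof -
  define c where "c = 1 / (2 * sqrt B)"
  have c: "c > 0" using B by (simp add: c_def)
  have Y': "\<bar>Y k\<bar> \<le> M" for k using Y[of k] by simp
  have am_gm: "sqrt (Y k) \<le> c * (Y k + B)" for k
  proof -
    have "0 \<le> (sqrt (Y k) - sqrt B)^2" by simp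
    then have "2 * sqrt (Y k) * sqrt B \<le> Y k + B" using Y B by (simp add: power2_eq_square algebra_simps)
    then show ?thesis using B by (simp add: c_def field_simps)
  qed
  have "poisson_avg l (\<lambda>k. sqrt (Y k)) \<le> poisson_avg l (\<lambda>k. c * (Y k + B))"
  proof (rule poisson_avg_mono[OF l am_gm])
    show "\<bar>sqrt (Y k)\<bar> \<le> sqrt M" for k using Y[of k] by simp
    show "\<bar>c * (Y k + B)\<bar> \<le> c * (M + B)" for k using Y[of k] B c by (simp add: abs_mult)
  qed
  also have "\<dots> = c * poisson_avg l (\<lambda>k. Y k + B)"
  proof (rule poisson_avg_cmult)
    show "\<bar>Y k + B\<bar> \<le> M + B" for k using Y[of k] B by simp
  qed
  also have "\<dots> = c * (poisson_avg l Y + B)"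
    using poisson_avg_add[of Y M "\<lambda>_. B" "\<bar>B\<bar>"] Y' by simp
  also have "\<dots> \<le> c * (B + B)" using B c by (intro mult_left_mono) auto
  also have "\<dots> = sqrt B" using B by (simp add: c_def field_simps real_sqrt_mult[symmetric])
  finally show ?thesis .
qed

lemma powr_neg_half_eq_sqrt:
  fixes z :: real assumes z: "z > 0"
  shows "z powr (- (real D / 2)) = sqrt (1 / z ^ D)"
proof -
  have "sqrt (1 / z ^ D) = (z powr (- real D)) powr (1 / 2)"
    using z by (simp add: powr_half_sqrt powr_minus_divide powr_realpow)
  also have "\<dots> = z powr (- (real D / 2))" by (simp add: powr_powr)
  finally show ?thesis by simp
qed

lemma powr_neg_le_of_le_double:
  fixes m a :: real assumes m: "m > 0" and a: "a > 0" and le: "a \<le> 2 * m" and h: "h \<ge> 0"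
  shows "m powr (- h) \<le> 2 powr h * a powr (- h)"
proof -
  have "m powr (- h) = (1 / m) powr h" using m by (simp add: powr_minus_divide powr_divide)
  also have "\<dots> \<le> (2 / a) powr h" using m a le h by (intro powr_mono2) (auto simp: field_simps)
  also have "\<dots> = 2 powr h * a powr (- h)" using a by (simp add: powr_divide powr_minus_divide)
  finally show ?thesis .
qed

lemma poisson_avg_powr_le_mean_powr:
  fixes D :: nat and c0 A l :: real
  assumes D: "D \<ge> 1" and c0: "c0 > 0" and A: "A \<ge> c0" and l: "l > 0"
  shows "poisson_avg l (\<lambda>k. (A + real k) powr (- (real D / 2)))
     \<le> (min (c0 / real D) 1) powr (- (real D / 2)) * l powr (- (real D / 2))"
proof -
  define h where "h = real D / 2"
  define \<delta> where "\<delta> = min (c0 / real D) 1"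
  define Y where "Y k = 1 / (real k + real D) ^ D" for k
  have h: "h > 0" using D by (simp add: h_def)
  have \<delta>: "\<delta> > 0" using c0 D by (auto simp: \<delta>_def)
  have kD: "real k + real D \<ge> 1" for k using D by simp
  have Y: "0 \<le> Y k" "Y k \<le> 1" for k
    using one_le_power[OF kD[of k], of D] by (auto simp: Y_def)
  have le_Y: "(A + real k) powr (- h) \<le> \<delta> powr (- h) * sqrt (Y k)" for k
  proof -
    have "\<delta> * (real k + real D) \<le> A + real k"
    proof (cases "c0 / real D \<le> 1")
      case True
      then have "\<delta> = c0 / real D" by (simp add: \<delta>_def)
      moreover have "c0 / real D * real k \<le> real k"
        using True c0 by (intro mult_left_le_one_le) auto
      moreover have "c0 / real D * real D = c0" using D by simp
      ultimately show ?thesis using A by (simp add: distrib_left)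
    next
      case False
      then show ?thesis using A D by (simp add: \<delta>_def field_simps)
    qed
    then have "(A + real k) powr (- h) \<le> (\<delta> * (real k + real D)) powr (- h)"
      using \<delta> kD[of k] h by (intro powr_mono2') auto
    also have "\<dots> = \<delta> powr (- h) * sqrt (Y k)"
      using \<delta> kD[of k] by (simp add: powr_mult h_def Y_def powr_neg_half_eq_sqrt)
    finally show ?thesis .
  qed
  have "poisson_avg l (\<lambda>k. (A + real k) powr (- h)) \<le> poisson_avg l (\<lambda>k. \<delta> powr (- h) * sqrt (Y k))"
  proof (rule poisson_avg_mono[OF _ le_Y])
    show "\<bar>(A + real k) powr (- h)\<bar> \<le> A powr (- h)" for k
      using A c0 h by (simp add: powr_mono2')
    show "\<bar>\<delta> powr (- h) * sqrt (Y k)\<bar> \<le> \<delta> powr (- h)" for k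
      using Y[of k] by (simp add: abs_mult mult_left_le)
  qed (use l in simp)
  also have "\<dots> = \<delta> powr (- h) * poisson_avg l (\<lambda>k. sqrt (Y k))"
    using Y by (intro poisson_avg_cmult[of _ 1]) auto
  also have "\<dots> \<le> \<delta> powr (- h) * sqrt (1 / l ^ D)"
    using poisson_avg_inverse_power_le[OF l, of D] l Y
    by (intro mult_left_mono poisson_avg_sqrt_le[of _ _ 1]) (auto simp: Y_def)
  also have "sqrt (1 / l ^ D) = l powr (- h)"
    unfolding h_def by (rule powr_neg_half_eq_sqrt[OF l, symmetric])
  finally show ?thesis unfolding h_def \<delta>_def .
qed

lemma poisson_avg_powr_le:
  fixes D :: nat and c0 A l :: real
  assumes D: "D \<ge> 1" and c0: "c0 > 0" and A: "A \<ge> c0" and l: "l \<ge> 0"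
  shows "poisson_avg l (\<lambda>k. (A + real k) powr (- (real D / 2)))
     \<le> (min (c0 / real D) 1) powr (- (real D / 2)) * 2 powr (real D / 2) * (A + l) powr (- (real D / 2))"
proof -
  define h where "h = real D / 2"
  define \<delta> where "\<delta> = min (c0 / real D) 1"
  have h: "h > 0" using D by (simp add: h_def)
  have \<delta>: "\<delta> > 0" "\<delta> \<le> 1" using c0 D by (auto simp: \<delta>_def)
  have Apos: "A > 0" using A c0 by simp
  show ?thesis
    unfolding h_def[symmetric] \<delta>_def[symmetric]
  proof (cases "l \<le> A")
    case True
    have "poisson_avg l (\<lambda>k. (A + real k) powr (- h)) \<le> A powr (- h)"
      using l Apos h by (intro poisson_avg_le) (auto simp: powr_mono2')
    also have "\<dots> \<le> \<delta> powr (- h) * A powr (- h)"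
    proof -
      have "\<delta> powr (- h) \<ge> 1" using \<delta> h by (simp add: powr_minus_divide ge_one_powr_ge_zero powr_le1)
      then show ?thesis by (simp add: mult_le_cancel_right1)
    qed
    also have "\<dots> \<le> \<delta> powr (- h) * (2 powr h * (A + l) powr (- h))"
      using True Apos l h by (intro mult_left_mono powr_neg_le_of_le_double) auto
    finally show "poisson_avg l (\<lambda>k. (A + real k) powr (- h)) \<le> \<delta> powr (- h) * 2 powr h * (A + l) powr (- h)"
      by (simp add: mult_ac)
  next
    case False
    then have l: "l > 0" using Apos by simp
    have "poisson_avg l (\<lambda>k. (A + real k) powr (- h)) \<le> \<delta> powr (- h) * l powr (- h)"
      using poisson_avg_powr_le_mean_powr[OF D c0 A l] unfolding h_def \<delta>_def .
    also have "\<dots> \<le> \<delta> powr (- h) * (2 powr h * (A + l) powr (- h))"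
      using False Apos l h by (intro mult_left_mono powr_neg_le_of_le_double) auto
    finally show "poisson_avg l (\<lambda>k. (A + real k) powr (- h)) \<le> \<delta> powr (- h) * 2 powr h * (A + l) powr (- h)"
      by (simp add: mult_ac)
  qed
qed

lemma poisson_heat_decay:
  fixes x y :: "real^'n"
  assumes c0: "c0 > 0" and e: "\<epsilon> > 0" and th: "\<theta> > 0" and c: "\<theta> * \<epsilon>^2 \<ge> c0" and t: "t \<ge> 0"
  shows "poisson_heat \<epsilon> \<theta> x t y \<le>
    (2 * pi) powr (- (real CARD('n) / 2)) * (min (c0 / real CARD('n)) 1) powr (- (real CARD('n) / 2))
      * 2 powr (real CARD('n) / 2) / (\<epsilon>^2 + t) powr (real CARD('n) / 2)"
proof -
  define h where "h = real CARD('n) / 2"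
  define K where "K = (min (c0 / real CARD('n)) 1) powr (- h) * 2 powr h"
  define A where "A = \<theta> * \<epsilon>^2"
  define P where "P = (2 * pi / \<theta>) powr (- h)"
  have A: "A > 0" using th e by (simp add: A_def)
  have P: "P \<ge> 0" by (simp add: P_def)
  have l: "\<theta> * t \<ge> 0" using th t by simp
  have bound: "\<bar>(A + real k) powr (- h)\<bar> \<le> A powr (- h)" for k
    using A by (simp add: h_def powr_mono2')
  have heat_le: "heat_kernel (\<epsilon>^2 + real k / \<theta>) x y \<le> P * (A + real k) powr (- h)" for k
  proof -
    have "heat_kernel (\<epsilon>^2 + real k / \<theta>) x y \<le> (2 * pi * (\<epsilon>^2 + real k / \<theta>)) powr (- h)"
      using heat_kernel_le[of "\<epsilon>^2 + real k / \<theta>" "\<epsilon>^2 + real k / \<theta>" x y] e th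
      by (simp add: h_def add_pos_nonneg)
    also have "2 * pi * (\<epsilon>^2 + real k / \<theta>) = (2 * pi / \<theta>) * (A + real k)"
      using th by (simp add: A_def field_simps)
    also have "((2 * pi / \<theta>) * (A + real k)) powr (- h) = P * (A + real k) powr (- h)"
      unfolding P_def using th A by (subst powr_mult) auto
    finally show ?thesis .
  qed
  have "poisson_heat \<epsilon> \<theta> x t y \<le> poisson_avg (\<theta> * t) (\<lambda>k. P * (A + real k) powr (- h))"
    unfolding poisson_heat_def
  proof (rule poisson_avg_mono[OF l heat_le abs_heat_kernel_shifted_le[OF e th]])
    show "\<bar>P * (A + real k) powr (- h)\<bar> \<le> P * A powr (- h)" for k
      using bound[of k] P by (simp add: abs_mult mult_left_mono)
  qed
  also have "\<dots> = P * poisson_avg (\<theta> * t) (\<lambda>k. (A + real k) powr (- h))"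
    using bound by (rule poisson_avg_cmult)
  also have "\<dots> \<le> P * (K * (A + \<theta> * t) powr (- h))"
    using poisson_avg_powr_le[of "CARD('n)" c0 A "\<theta> * t"] c0 c l P
    by (intro mult_left_mono) (simp_all add: K_def h_def A_def mult_ac)
  also have "P * (K * (A + \<theta> * t) powr (- h)) = (2 * pi) powr (- h) * K / (\<epsilon>^2 + t) powr h"
  proof -
    have "2 * pi / \<theta> * (A + \<theta> * t) = 2 * pi * (\<epsilon>^2 + t)"
      using th by (simp add: A_def field_simps)
    then have "P * (A + \<theta> * t) powr (- h) = (2 * pi) powr (- h) * (\<epsilon>^2 + t) powr (- h)"
      using th A l e t by (simp add: P_def powr_mult[symmetric] add_pos_nonneg)
    then show ?thesis
      by (metis (no_types, lifting) powr_minus divide_inverse mult.assoc mult.left_commute)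
  qed
  finally show ?thesis unfolding K_def h_def by (simp add: mult_ac)
qed

lemma solution_eq_poisson_heat:
  assumes "\<epsilon> > 0" "\<theta> > 0" "solves_generator_eq \<theta> (heat_kernel (\<epsilon>^2) x) \<psi>" "t \<ge> 0"
  shows "\<psi> t y = poisson_heat \<epsilon> \<theta> (x::real^'n) t y"
  using solves_generator_eq_unique[OF assms(2,3) solves_generator_eq_poisson_heat[OF assms(1,2)] assms(4)] .

lemma abs_solution_le:
  fixes x y :: "real^'n"
  assumes "c0 > 0" "\<epsilon> > 0" "\<theta> > 0" "\<theta> * \<epsilon>^2 \<ge> c0"
    and "solves_generator_eq \<theta> (heat_kernel (\<epsilon>^2) x) \<psi>" "t \<ge> 0"
  shows "\<bar>\<psi> t y\<bar> \<le>
    (2 * pi) powr (- (real CARD('n) / 2)) * (min (c0 / real CARD('n)) 1) powr (- (real CARD('n) / 2))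
      * 2 powr (real CARD('n) / 2) / (\<epsilon>^2 + t) powr (real CARD('n) / 2)"
  using solution_eq_poisson_heat[OF assms(2,3,5,6), of y] poisson_heat_nonneg[OF assms(2,3,6), of x y]
    poisson_heat_decay[OF assms(1-4,6), of x y] by simp

theorem mainTheorem16:
  fixes c0 :: real
  assumes c0_pos: "c0 > 0"
  shows
    "(\<forall>(\<epsilon>::real) (\<theta>::real) (x::real^'n) (\<psi>::real \<Rightarrow> real^'n \<Rightarrow> real) (M::'a measure) N.
        \<epsilon> > 0 \<longrightarrow> \<theta> > 0 \<longrightarrow> \<theta> * \<epsilon>^2 \<ge> c0 \<longrightarrow>
        solves_generator_eq \<theta> (heat_kernel (\<epsilon>^2) x) \<psi> \<longrightarrow>
        rate_one_poisson_process M N \<longrightarrow>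
        (\<forall>t\<ge>0. \<forall>y.
           \<psi> t y = (\<integral>\<omega>. heat_kernel (\<epsilon>^2 + real (N (\<theta> * t) \<omega>) / \<theta>) x y \<partial>M)))
     \<and>
     (\<exists>C. \<forall>(\<epsilon>::real) (\<theta>::real) (x::real^'n) (\<psi>::real \<Rightarrow> real^'n \<Rightarrow> real).
        \<epsilon> > 0 \<longrightarrow> \<theta> > 0 \<longrightarrow> \<theta> * \<epsilon>^2 \<ge> c0 \<longrightarrow>
        solves_generator_eq \<theta> (heat_kernel (\<epsilon>^2) x) \<psi> \<longrightarrow>
        (\<forall>t\<ge>0. bdd_above (range (\<lambda>y. \<bar>\<psi> t y\<bar>)) \<and>
           (SUP y. \<bar>\<psi> t y\<bar>) \<le> C / (\<epsilon>^2 + t) powr (real CARD('n) / 2)))"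
proof (intro conjI exI[of _ "(2 * pi) powr (- (real CARD('n) / 2)) *
    (min (c0 / real CARD('n)) 1) powr (- (real CARD('n) / 2)) * 2 powr (real CARD('n) / 2)"] allI impI)
  fix \<epsilon> \<theta> t :: real and x y :: "real^'n" and \<psi> M N
  assume e: "\<epsilon> > 0" and th: "\<theta> > 0" and sol: "solves_generator_eq \<theta> (heat_kernel (\<epsilon>^2) x) \<psi>"
    and N: "rate_one_poisson_process M N" and t: "t \<ge> 0"
  have "\<psi> t y = poisson_heat \<epsilon> \<theta> x t y"
    by (rule solution_eq_poisson_heat[OF e th sol t])
  also have "\<dots> = (\<integral>\<omega>. heat_kernel (\<epsilon>^2 + real (N (\<theta> * t) \<omega>) / \<theta>) x y \<partial>M)"
    unfolding poisson_heat_def using th t heat_kernel_shifted_le[OF e th]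
    by (intro integral_rate_one_poisson_process[OF N, symmetric] heat_kernel_nonneg) auto
  finally show "\<psi> t y = (\<integral>\<omega>. heat_kernel (\<epsilon>^2 + real (N (\<theta> * t) \<omega>) / \<theta>) x y \<partial>M)" .
qed (use abs_solution_le[OF c0_pos] in \<open>auto intro!: bdd_aboveI2 cSUP_least\<close>)

end
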